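(* Given an example pair $(x,y)\in\mathcal{X}\times\{\pm1\}$ and a function $\hat h:\mathcal{X}\to\mathbb{R}$, there exists $p^*\in\{0,1\}$ such that $p^*(\hat h(x)y-1)\le\hat y\,y-1$, where $\hat y=\mathbb{E}[\Pi(\hat h(x))]$, the expectation taken only with respect to the randomness of $\Pi$.
   Context: Randomized projection: for $z\in\mathbb{R}$, $\Pi(z)$ is the random label equal to $\mathrm{sign}(z)$ if $|z|\ge1$; otherwise $\Pi(z)=+1$ with probability $\frac{1+z}{2}$ and $-1$ with probability $\frac{1-z}{2}$. *)

theory Defs
  imports "HOL-Probability.Probability"
begin

definition rand_proj :: "real \<Rightarrow> real pmf" where
  "rand_proj z = (if \<bar>z\<bar> \<ge> 1 then return_pmf (sgn z)
                  else map_pmf (\<lambda>b. if b then 1 else -1) (bernoulli_pmf ((1 + z) / 2)))"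

end

theory Submission
  imports Defs
begin

text \<open>The mean of \<open>\<Pi>(z)\<close> is \<open>z\<close> clipped to \<open>[-1, 1]\<close>. Clipping never lowers the margin
  \<open>z y\<close> below \<open>min 1 (z y)\<close>, and \<open>min 1 (z y) - 1\<close> is \<open>p (z y - 1)\<close> for \<open>p = 0\<close> or \<open>p = 1\<close>.\<close>

lemma expectation_rand_proj:
  "measure_pmf.expectation (rand_proj z) (\<lambda>t. t) = max (-1) (min 1 z)"
proof (cases "\<bar>z\<bar> \<ge> 1")
  case True
  then show ?thesis by (auto simp: rand_proj_def sgn_if)
next
  case False
  then have "0 \<le> (1 + z) / 2" "(1 + z) / 2 \<le> 1" by auto
  with False show ?thesis
    by (simp add: rand_proj_def integral_map_pmf field_simps)
qed

lemma min_margin_le_clipped_margin: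
  fixes z y :: real
  assumes "y \<in> {-1, 1}"
  shows "min 1 (z * y) \<le> max (-1) (min 1 z) * y"
  using assms by auto

theorem lemma5:
  fixes h :: "'a \<Rightarrow> real" and x :: 'a and y :: real
  assumes "y \<in> {-1, 1}"
  shows "\<exists>p\<in>{0::real, 1}.
           p * (h x * y - 1) \<le> measure_pmf.expectation (rand_proj (h x)) (\<lambda>t. t) * y - 1"
proof
  let ?p = "if h x * y \<ge> 1 then 0 else 1 :: real"
  show "?p \<in> {0, 1}" by simp
  have "?p * (h x * y - 1) = min 1 (h x * y) - 1" by simp
  also have "\<dots> \<le> max (-1) (min 1 (h x)) * y - 1"
    using min_margin_le_clipped_margin[OF assms] by simp
  finally show "?p * (h x * y - 1) \<le> measure_pmf.expectation (rand_proj (h x)) (\<lambda>t. t) * y - 1"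
    by (simp only: expectation_rand_proj)
qed

end
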